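(* Let $\mathsf{Ch}_3=\langle a,b,c\rangle$. Define $2\times2$ tropical matrices (writing $-$ for $-\infty$): $\rho_1$: $a\mapsto\begin{pmatrix}1&0\\-&0\end{pmatrix}$, $b\mapsto\begin{pmatrix}0&0\\-&1\end{pmatrix}$, $c\mapsto\begin{pmatrix}0&0\\-&1\end{pmatrix}$; $\rho_2$: $a\mapsto\begin{pmatrix}1&0\\-&0\end{pmatrix}$, $b\mapsto\begin{pmatrix}1&0\\-&0\end{pmatrix}$, $c\mapsto\begin{pmatrix}0&0\\-&1\end{pmatrix}$; $\rho_3$: $a\mapsto\begin{pmatrix}1&1\\-&0\end{pmatrix}$, $b\mapsto\begin{pmatrix}0&0\\-&0\end{pmatrix}$, $c\mapsto\begin{pmatrix}0&1\\-&1\end{pmatrix}$. Then the map $\rho=(\rho_1,\rho_2,\rho_3):\mathsf{Ch}_3\to(\mathcal M_2(\mathbb T))^3$, sending a word in $a,b,c$ to the corresponding products of these matrices (and the identity of $\mathsf{Ch}_3$ to the triple $(I_1,I_2,I_3)$ with $I_1=I_2=\begin{pmatrix}0&-1\\-&0\end{pmatrix}$, $I_3=\begin{pmatrix}0&0\\-&0\end{pmatrix}$, each of which acts as a two-sided identity on the semigroup generated by the corresponding generator images), is a well-defined injective semigroup homomorphism.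
   Context: The Chinese monoid $\mathsf{Ch}_3=\langle a,b,c\rangle$ (with $a=a_1,b=a_2,c=a_3$) is presented by the relations $a_ja_ka_i=a_ka_ja_i=a_ka_ia_j$ for all $1\le i\le j\le k\le 3$. $\mathbb T=\mathbb R\cup\{-\infty\}$ is the max-plus semiring (addition $\max$, multiplication ordinary $+$), and $\mathcal M_2(\mathbb T)$ is the monoid of $2\times2$ matrices over $\mathbb T$ with product $(AB)_{ij}=\max_k(A_{ik}+B_{kj})$; $(\mathcal M_2(\mathbb T))^3$ has componentwise product. *)

theory Defs
  imports Main "HOL-Library.Extended_Real"
begin

datatype gen = A | B | C

fun idx :: "gen \<Rightarrow> nat" where
  "idx A = 1" | "idx B = 2" | "idx C = 3"

inductive ch3_step :: "gen list \<Rightarrow> gen list \<Rightarrow> bool" where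
  s1: "idx i \<le> idx j \<Longrightarrow> idx j \<le> idx k \<Longrightarrow>
         ch3_step (u @ [j, k, i] @ v) (u @ [k, j, i] @ v)"
| s2: "idx i \<le> idx j \<Longrightarrow> idx j \<le> idx k \<Longrightarrow>
         ch3_step (u @ [k, j, i] @ v) (u @ [k, i, j] @ v)"

definition ch3_eq :: "gen list \<Rightarrow> gen list \<Rightarrow> bool" where
  "ch3_eq = equivclp ch3_step"

datatype trop = NegInf | Fin real

fun tadd :: "trop \<Rightarrow> trop \<Rightarrow> trop" where
  "tadd NegInf y = y"
| "tadd x NegInf = x"
| "tadd (Fin x) (Fin y) = Fin (max x y)"

fun tmul :: "trop \<Rightarrow> trop \<Rightarrow> trop" where
  "tmul (Fin x) (Fin y) = Fin (x + y)"
| "tmul _ _ = NegInf"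

text \<open>A 2x2 matrix (m11, m12, m21, m22).\<close>
datatype mat2 = M trop trop trop trop

fun mmul :: "mat2 \<Rightarrow> mat2 \<Rightarrow> mat2" where
  "mmul (M a11 a12 a21 a22) (M b11 b12 b21 b22) =
     M (tadd (tmul a11 b11) (tmul a12 b21)) (tadd (tmul a11 b12) (tmul a12 b22))
       (tadd (tmul a21 b11) (tmul a22 b21)) (tadd (tmul a21 b12) (tmul a22 b22))"

type_synonym mat3 = "mat2 \<times> mat2 \<times> mat2"

fun mmul3 :: "mat3 \<Rightarrow> mat3 \<Rightarrow> mat3" where
  "mmul3 (x1, x2, x3) (y1, y2, y3) = (mmul x1 y1, mmul x2 y2, mmul x3 y3)"

fun rho1 :: "gen \<Rightarrow> mat2" where
  "rho1 A = M (Fin 1) (Fin 0) NegInf (Fin 0)"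
| "rho1 B = M (Fin 0) (Fin 0) NegInf (Fin 1)"
| "rho1 C = M (Fin 0) (Fin 0) NegInf (Fin 1)"

fun rho2 :: "gen \<Rightarrow> mat2" where
  "rho2 A = M (Fin 1) (Fin 0) NegInf (Fin 0)"
| "rho2 B = M (Fin 1) (Fin 0) NegInf (Fin 0)"
| "rho2 C = M (Fin 0) (Fin 0) NegInf (Fin 1)"

fun rho3 :: "gen \<Rightarrow> mat2" where
  "rho3 A = M (Fin 1) (Fin 1) NegInf (Fin 0)"
| "rho3 B = M (Fin 0) (Fin 0) NegInf (Fin 0)"
| "rho3 C = M (Fin 0) (Fin 1) NegInf (Fin 1)"

definition rho_gen :: "gen \<Rightarrow> mat3" where
  "rho_gen g = (rho1 g, rho2 g, rho3 g)"

definition I12 :: mat2 where "I12 = M (Fin 0) (Fin (-1)) NegInf (Fin 0)"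
definition I3 :: mat2 where "I3 = M (Fin 0) (Fin 0) NegInf (Fin 0)"

fun rho :: "gen list \<Rightarrow> mat3" where
  "rho [] = (I12, I12, I3)"
| "rho (x # xs) = foldl (\<lambda>m g. mmul3 m (rho_gen g)) (rho_gen x) xs"

end

theory Submission
  imports Defs
begin

(* The generator images are upper triangular matrices (p q; -inf r) with finite entries and
   q >= max p r + d, where d = -1 for rho_1, rho_2 and d = 0 for rho_3. Such matrices form a
   monoid with identity (0 d; -inf 0), which makes (I12, I12, I3) the identity and rho a
   homomorphism; the defining relations are then checked on generators.
   For injectivity, every word is congruent to a normal form
   a^x11 (ba)^x21 b^x22 (ca)^x31 (cb)^x32 c^x33, computed by appending one letter at a time,
   and rho of this normal form has entries linear in the six exponents, which can be read
   back from them. *)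

definition utri :: "real \<Rightarrow> real \<Rightarrow> real \<Rightarrow> mat2" where
  "utri p q r = M (Fin p) (Fin q) NegInf (Fin r)"

lemma mmul_utri [simp]:
  "mmul (utri p q r) (utri p' q' r') = utri (p + p') (max (p + q') (q + r')) (r + r')"
  by (simp add: utri_def)

lemma utri_eq_iff [simp]: "utri p q r = utri p' q' r' \<longleftrightarrow> p = p' \<and> q = q' \<and> r = r'"
  by (simp add: utri_def)

definition utri_monoid :: "real \<Rightarrow> mat2 set" where
  "utri_monoid d = {utri p q r | p q r. p + d \<le> q \<and> r + d \<le> q}"

lemma utri_unit_in_monoid: "utri 0 d 0 \<in> utri_monoid d"
  by (auto simp: utri_monoid_def)

lemma mmul_utri_monoid_closed:
  "X \<in> utri_monoid d \<Longrightarrow> Y \<in> utri_monoid d \<Longrightarrow> mmul X Y \<in> utri_monoid d"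
  by (fastforce simp: utri_monoid_def)

lemma mmul_utri_monoid_assoc:
  "X \<in> utri_monoid d \<Longrightarrow> Y \<in> utri_monoid d \<Longrightarrow> Z \<in> utri_monoid d \<Longrightarrow>
   mmul (mmul X Y) Z = mmul X (mmul Y Z)"
  by (auto simp: utri_monoid_def max_add_distrib_left max_add_distrib_right ac_simps)

lemma mmul_utri_monoid_left_unit: "X \<in> utri_monoid d \<Longrightarrow> mmul (utri 0 d 0) X = X"
  by (auto simp: utri_monoid_def max_def)

lemma mmul_utri_monoid_right_unit: "X \<in> utri_monoid d \<Longrightarrow> mmul X (utri 0 d 0) = X"
  by (auto simp: utri_monoid_def max_def)

definition utri_monoid3 :: "mat3 set" where
  "utri_monoid3 = utri_monoid (-1) \<times> utri_monoid (-1) \<times> utri_monoid 0"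

lemma rho_Nil_eq_utri: "rho [] = (utri 0 (-1) 0, utri 0 (-1) 0, utri 0 0 0)"
  by (simp add: I12_def I3_def utri_def)

lemma rho_gen_eq_utri:
  "rho_gen A = (utri 1 0 0, utri 1 0 0, utri 1 1 0)"
  "rho_gen B = (utri 0 0 1, utri 1 0 0, utri 0 0 0)"
  "rho_gen C = (utri 0 0 1, utri 0 0 1, utri 0 1 1)"
  by (simp_all add: rho_gen_def utri_def)

lemma rho_gen_in_utri_monoid3: "rho_gen g \<in> utri_monoid3"
  by (cases g) (force simp: rho_gen_eq_utri utri_monoid3_def utri_monoid_def)+

lemma mmul3_utri_monoid3_closed:
  "X \<in> utri_monoid3 \<Longrightarrow> Y \<in> utri_monoid3 \<Longrightarrow> mmul3 X Y \<in> utri_monoid3"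
  by (cases X; cases Y) (auto simp: utri_monoid3_def mmul_utri_monoid_closed)

lemma mmul3_utri_monoid3_assoc:
  "X \<in> utri_monoid3 \<Longrightarrow> Y \<in> utri_monoid3 \<Longrightarrow> Z \<in> utri_monoid3 \<Longrightarrow>
   mmul3 (mmul3 X Y) Z = mmul3 X (mmul3 Y Z)"
  by (cases X; cases Y; cases Z) (auto simp: utri_monoid3_def mmul_utri_monoid_assoc)

lemma mmul3_rho_Nil_left: "X \<in> utri_monoid3 \<Longrightarrow> mmul3 (rho []) X = X"
  by (cases X) (auto simp: rho_Nil_eq_utri utri_monoid3_def mmul_utri_monoid_left_unit
      simp del: rho.simps)

lemma mmul3_rho_Nil_right: "X \<in> utri_monoid3 \<Longrightarrow> mmul3 X (rho []) = X"
  by (cases X) (auto simp: rho_Nil_eq_utri utri_monoid3_def mmul_utri_monoid_right_unit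
      simp del: rho.simps)

lemma rho_snoc: "rho (u @ [g]) = mmul3 (rho u) (rho_gen g)"
  by (cases u) (simp_all add: mmul3_rho_Nil_left rho_gen_in_utri_monoid3 del: rho.simps(1))

lemma rho_in_utri_monoid3: "rho u \<in> utri_monoid3"
proof (induction u rule: rev_induct)
  case Nil
  show ?case by (simp add: rho_Nil_eq_utri utri_monoid3_def utri_unit_in_monoid del: rho.simps)
next
  case (snoc g u)
  then show ?case by (simp add: rho_snoc mmul3_utri_monoid3_closed rho_gen_in_utri_monoid3)
qed

lemma rho_append: "rho (u @ v) = mmul3 (rho u) (rho v)"
proof (induction v rule: rev_induct)
  case Nil
  show ?case by (simp add: mmul3_rho_Nil_right rho_in_utri_monoid3 del: rho.simps(1))
next
  case (snoc g v)
  have "rho (u @ v @ [g]) = mmul3 (rho (u @ v)) (rho_gen g)"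
    using rho_snoc[of "u @ v"] by simp
  also have "\<dots> = mmul3 (mmul3 (rho u) (rho v)) (rho_gen g)"
    using snoc.IH by simp
  also have "\<dots> = mmul3 (rho u) (mmul3 (rho v) (rho_gen g))"
    by (simp add: mmul3_utri_monoid3_assoc rho_in_utri_monoid3 rho_gen_in_utri_monoid3)
  also have "\<dots> = mmul3 (rho u) (rho (v @ [g]))"
    by (simp add: rho_snoc)
  finally show ?case by simp
qed

lemma rho_respects_relations:
  assumes "idx i \<le> idx j" "idx j \<le> idx k"
  shows "rho [j, k, i] = rho [k, j, i]" and "rho [k, j, i] = rho [k, i, j]"
  using assms by (cases i; cases j; cases k; simp add: rho_gen_eq_utri max_def)+

lemma rho_ch3_step: "ch3_step u v \<Longrightarrow> rho u = rho v"
  by (induction rule: ch3_step.induct) (metis rho_append rho_respects_relations)+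

lemma rho_ch3_eq: "ch3_eq u v \<Longrightarrow> rho u = rho v"
  unfolding ch3_eq_def by (induction rule: equivclp_induct) (auto dest: rho_ch3_step)

notation ch3_eq (infix "\<approx>" 50)

lemma ch3_eq_refl [simp]: "u \<approx> u"
  by (simp add: ch3_eq_def)

lemma ch3_eq_sym: "u \<approx> v \<Longrightarrow> v \<approx> u"
  unfolding ch3_eq_def by (rule equivclp_sym)

lemma ch3_eq_trans [trans]: "u \<approx> v \<Longrightarrow> v \<approx> w \<Longrightarrow> u \<approx> w"
  unfolding ch3_eq_def by (rule equivclp_trans)

lemma ch3_step_context: "ch3_step u v \<Longrightarrow> ch3_step (x @ u @ y) (x @ v @ y)"
proof (induction rule: ch3_step.induct)
  case (s1 i j k u v)
  then show ?case using ch3_step.s1[of i j k "x @ u" "v @ y"] by simp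
next
  case (s2 i j k u v)
  then show ?case using ch3_step.s2[of i j k "x @ u" "v @ y"] by simp
qed

lemma ch3_eq_context: "u \<approx> v \<Longrightarrow> x @ u @ y \<approx> x @ v @ y"
  unfolding ch3_eq_def
  by (induction rule: equivclp_induct) (auto intro: equivclp_into_equivclp ch3_step_context)

lemma ch3_eq_relations:
  assumes "idx i \<le> idx j" "idx j \<le> idx k"
  shows "[j, k, i] \<approx> [k, j, i]" and "[k, j, i] \<approx> [k, i, j]"
  using assms ch3_step.intros[of i j k "[]" "[]"] by (simp_all add: ch3_eq_def r_into_equivclp)

lemma ch3_eq_commute_high: "idx i \<le> idx k \<Longrightarrow> [k] @ [k, i] \<approx> [k, i] @ [k]"
  using ch3_eq_relations(2)[of i k k] by simp

lemma ch3_eq_commute_middle: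
  assumes "idx i \<le> idx j" "idx j \<le> idx k"
  shows "[k, i] @ [j] \<approx> [j] @ [k, i]"
proof -
  have "[k, i, j] \<approx> [k, j, i]" using ch3_eq_relations(2)[OF assms] by (rule ch3_eq_sym)
  also have "\<dots> \<approx> [j, k, i]" using ch3_eq_relations(1)[OF assms] by (rule ch3_eq_sym)
  finally show ?thesis by simp
qed

lemma ch3_eq_commute_pairs:
  assumes "idx i \<le> idx j" "idx j \<le> idx k"
  shows "[k, j] @ [k, i] \<approx> [k, i] @ [k, j]"
proof -
  have "[k, j, k, i] \<approx> [k, k, i, j]"
    using ch3_eq_context[OF ch3_eq_sym[OF ch3_eq_commute_middle[OF assms]], of "[k]" "[]"] by simp
  also have "\<dots> \<approx> [k, i, k, j]"
    using ch3_eq_context[OF ch3_eq_commute_high[of i k], of "[]" "[j]"] assms by simp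
  finally show ?thesis by simp
qed

definition wpow :: "nat \<Rightarrow> gen list \<Rightarrow> gen list" where
  "wpow n w = concat (replicate n w)"

lemma wpow_0 [simp]: "wpow 0 w = []"
  by (simp add: wpow_def)

lemma wpow_Suc: "wpow (Suc n) w = w @ wpow n w"
  by (simp add: wpow_def)

lemma wpow_Suc_right: "wpow (Suc n) w = wpow n w @ w"
  by (simp add: wpow_def replicate_append_same[symmetric] del: replicate_append_same)

lemma ch3_eq_commute_wpow: "w @ z \<approx> z @ w \<Longrightarrow> wpow n w @ z \<approx> z @ wpow n w"
proof (induction n)
  case 0
  then show ?case by simp
next
  case (Suc n)
  have "wpow (Suc n) w @ z = w @ wpow n w @ z" by (simp add: wpow_Suc)
  also have "\<dots> \<approx> w @ z @ wpow n w"
    using ch3_eq_context[OF Suc.IH[OF Suc.prems], of w "[]"] by simp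
  also have "\<dots> \<approx> z @ w @ wpow n w"
    using ch3_eq_context[OF Suc.prems, of "[]" "wpow n w"] by simp
  finally show ?case by (simp add: wpow_Suc)
qed

lemma ch3_eq_commute_append:
  "u @ z \<approx> z @ u \<Longrightarrow> v @ z \<approx> z @ v \<Longrightarrow> (u @ v) @ z \<approx> z @ u @ v"
  using ch3_eq_context[of "v @ z" "z @ v" u "[]"] ch3_eq_context[of "u @ z" "z @ u" "[]" v]
  by (auto intro: ch3_eq_trans)

lemma ch3_eq_commute_A_BA_CA:
  "(wpow m [B, A] @ wpow n [C, A]) @ [A] \<approx> [A] @ wpow m [B, A] @ wpow n [C, A]"
  by (intro ch3_eq_commute_append ch3_eq_commute_wpow ch3_eq_commute_middle) simp_all

lemma ch3_eq_commute_B_CA_CB: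
  "(wpow m [C, A] @ wpow n [C, B]) @ [B] \<approx> [B] @ wpow m [C, A] @ wpow n [C, B]"
  by (intro ch3_eq_commute_append ch3_eq_commute_wpow ch3_eq_commute_middle) simp_all

lemma ch3_eq_commute_CA_CB_C:
  "(wpow m [C, B] @ wpow n [C]) @ [C, A] \<approx> [C, A] @ wpow m [C, B] @ wpow n [C]"
  by (intro ch3_eq_commute_append ch3_eq_commute_wpow ch3_eq_commute_pairs ch3_eq_commute_high)
    simp_all

lemma ch3_eq_CBA_past_CA_CB:
  "wpow m [C, A] @ wpow n [C, B] @ [C, B, A] \<approx> [B] @ wpow m [C, A] @ [C, A] @ wpow n [C, B]"
proof -
  have "wpow m [C, A] @ wpow n [C, B] @ [C, B, A] \<approx>
      (wpow m [C, A] @ wpow n [C, B]) @ [B] @ [C, A]"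
    using ch3_eq_context[OF ch3_eq_sym[OF ch3_eq_relations(1)[of A B C]],
        of "wpow m [C, A] @ wpow n [C, B]" "[]"]
    by simp
  also have "\<dots> \<approx> [B] @ wpow m [C, A] @ wpow n [C, B] @ [C, A]"
    using ch3_eq_context[OF ch3_eq_commute_B_CA_CB[of m n], of "[]" "[C, A]"] by simp
  also have "\<dots> \<approx> [B] @ wpow m [C, A] @ [C, A] @ wpow n [C, B]"
    using ch3_eq_context[OF ch3_eq_commute_CA_CB_C[of n 0], of "[B] @ wpow m [C, A]" "[]"] by simp
  finally show ?thesis .
qed

lemma ch3_eq_BA_past_B_CA:
  "wpow n [B] @ [B] @ wpow m [C, A] @ [A] \<approx> [B, A] @ wpow n [B] @ wpow m [C, A]"
proof -
  have "wpow n [B] @ [B] @ wpow m [C, A] @ [A] \<approx> wpow n [B] @ [B] @ [A] @ wpow m [C, A]"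
    using ch3_eq_context[OF ch3_eq_commute_A_BA_CA[of 0 m], of "wpow n [B] @ [B]" "[]"] by simp
  also have "\<dots> \<approx> [B, A] @ wpow n [B] @ wpow m [C, A]"
    using ch3_eq_context[OF ch3_eq_commute_wpow[where n = n, OF ch3_eq_commute_high[of A B]],
        of "[]" "wpow m [C, A]"]
    by simp
  finally show ?thesis .
qed

datatype nf = NF nat nat nat nat nat nat

fun nf_word :: "nf \<Rightarrow> gen list" where
  "nf_word (NF x11 x21 x22 x31 x32 x33) =
     wpow x11 [A] @ wpow x21 [B, A] @ wpow x22 [B] @
     wpow x31 [C, A] @ wpow x32 [C, B] @ wpow x33 [C]"

fun nf_snoc :: "nf \<Rightarrow> gen \<Rightarrow> nf" where
  "nf_snoc (NF x11 x21 x22 x31 x32 x33) C = NF x11 x21 x22 x31 x32 (Suc x33)"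
| "nf_snoc (NF x11 x21 x22 x31 x32 (Suc x33)) B = NF x11 x21 x22 x31 (Suc x32) x33"
| "nf_snoc (NF x11 x21 x22 x31 x32 0) B = NF x11 x21 (Suc x22) x31 x32 0"
| "nf_snoc (NF x11 x21 x22 x31 x32 (Suc x33)) A = NF x11 x21 x22 (Suc x31) x32 x33"
| "nf_snoc (NF x11 x21 x22 x31 (Suc x32) 0) A = NF x11 x21 (Suc x22) (Suc x31) x32 0"
| "nf_snoc (NF x11 x21 (Suc x22) x31 0 0) A = NF x11 (Suc x21) x22 x31 0 0"
| "nf_snoc (NF x11 x21 0 x31 0 0) A = NF (Suc x11) x21 0 x31 0 0"

definition nf_of :: "gen list \<Rightarrow> nf" where
  "nf_of u = foldl nf_snoc (NF 0 0 0 0 0 0) u"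

lemma nf_word_snoc: "nf_word t @ [g] \<approx> nf_word (nf_snoc t g)"
proof (cases "(t, g)" rule: nf_snoc.cases)
  case (1 x11 x21 x22 x31 x32 x33)
  then show ?thesis by (simp add: wpow_Suc_right)
next
  case (2 x11 x21 x22 x31 x32 x33)
  have "wpow x33 [C] @ [C, B] \<approx> [C, B] @ wpow x33 [C]"
    by (intro ch3_eq_commute_wpow ch3_eq_commute_high) simp
  from ch3_eq_context[OF this, of "wpow x11 [A] @ wpow x21 [B, A] @ wpow x22 [B] @
      wpow x31 [C, A] @ wpow x32 [C, B]" "[]"]
  show ?thesis using 2 by (simp add: wpow_Suc_right wpow_Suc)
next
  case (3 x11 x21 x22 x31 x32)
  from ch3_eq_context[OF ch3_eq_commute_B_CA_CB[of x31 x32],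
      of "wpow x11 [A] @ wpow x21 [B, A] @ wpow x22 [B]" "[]"]
  show ?thesis using 3 by (simp add: wpow_Suc_right)
next
  case (4 x11 x21 x22 x31 x32 x33)
  from ch3_eq_context[OF ch3_eq_commute_CA_CB_C[of x32 x33],
      of "wpow x11 [A] @ wpow x21 [B, A] @ wpow x22 [B] @ wpow x31 [C, A]" "[]"]
  show ?thesis using 4 by (simp add: wpow_Suc_right)
next
  case (5 x11 x21 x22 x31 x32)
  from ch3_eq_context[OF ch3_eq_CBA_past_CA_CB[of x31 x32],
      of "wpow x11 [A] @ wpow x21 [B, A] @ wpow x22 [B]" "[]"]
  show ?thesis using 5 by (simp add: wpow_Suc_right)
next
  case (6 x11 x21 x22 x31)
  from ch3_eq_context[OF ch3_eq_BA_past_B_CA[of x22 x31], of "wpow x11 [A] @ wpow x21 [B, A]" "[]"]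
  show ?thesis using 6 by (simp add: wpow_Suc_right)
next
  case (7 x11 x21 x31)
  from ch3_eq_context[OF ch3_eq_commute_A_BA_CA[of x21 x31], of "wpow x11 [A]" "[]"]
  show ?thesis using 7 by (simp add: wpow_Suc_right)
qed

lemma ch3_eq_nf_word_nf_of: "u \<approx> nf_word (nf_of u)"
proof (induction u rule: rev_induct)
  case Nil
  show ?case by (simp add: nf_of_def)
next
  case (snoc g u)
  have "u @ [g] \<approx> nf_word (nf_of u) @ [g]"
    using ch3_eq_context[OF snoc.IH, of "[]" "[g]"] by simp
  also have "\<dots> \<approx> nf_word (nf_snoc (nf_of u) g)" by (rule nf_word_snoc)
  finally show ?case by (simp add: nf_of_def)
qed

(* rho (nf_word t) in closed form *)
fun nf_rho :: "nf \<Rightarrow> mat3" where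
  "nf_rho (NF x11 x21 x22 x31 x32 x33) =
    (utri (real (x11 + x21 + x31)) (real (x11 + x21 + x22 + x31 + 2 * x32 + x33) - 1)
       (real (x21 + x22 + x31 + 2 * x32 + x33)),
     utri (real (x11 + 2 * x21 + x22 + x31 + x32))
       (real (x11 + 2 * x21 + x22 + x31 + x32 + x33) - 1) (real (x31 + x32 + x33)),
     utri (real (x11 + x21 + x31)) (real (x11 + x21 + x31 + x32 + x33)) (real (x31 + x32 + x33)))"

lemma nf_rho_snoc: "nf_rho (nf_snoc t g) = mmul3 (nf_rho t) (rho_gen g)"
  by (induction t g rule: nf_snoc.induct) (auto simp: rho_gen_eq_utri max_def)

lemma rho_eq_nf_rho_nf_of: "rho u = nf_rho (nf_of u)"
proof (induction u rule: rev_induct)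
  case Nil
  show ?case by (simp add: nf_of_def rho_Nil_eq_utri del: rho.simps)
next
  case (snoc g u)
  then show ?case by (simp add: rho_snoc nf_of_def nf_rho_snoc)
qed

lemma nf_rho_inj: "nf_rho t = nf_rho s \<Longrightarrow> t = s"
  by (cases t; cases s) auto

theorem lemmaA1:
  shows "(\<forall>u v. rho (u @ v) = mmul3 (rho u) (rho v))
       \<and> (\<forall>u v. ch3_eq u v \<longrightarrow> rho u = rho v)
       \<and> (\<forall>u v. rho u = rho v \<longrightarrow> ch3_eq u v)"
proof (intro conjI allI impI)
  fix u v
  show "rho (u @ v) = mmul3 (rho u) (rho v)" by (rule rho_append)
next
  fix u v
  assume "u \<approx> v"
  then show "rho u = rho v" by (rule rho_ch3_eq)
next
  fix u v
  assume "rho u = rho v"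
  then have "nf_of u = nf_of v" by (simp add: rho_eq_nf_rho_nf_of nf_rho_inj)
  then show "u \<approx> v"
    using ch3_eq_nf_word_nf_of[of u] ch3_eq_nf_word_nf_of[of v] by (metis ch3_eq_sym ch3_eq_trans)
qed

end
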